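(* Let $P$ be a finite bounded poset with minimum $\hat{0}$ and maximum $\hat{1}$, and let $h$ be a height function on $P$. Then $$\mathsf{Z}_{P,h}([-1]_q)=q^{-h(\hat{0})-h(\hat{1})}\,\mu_P(\hat{0},\hat{1}),$$ where $\mu_P$ is the Möbius function of $P$.
   Context: $q$ is an indeterminate; $[n]_q=(q^n-1)/(q-1)$ for $n\in\mathbb{Z}$ (so $[-1]_q=-q^{-1}$). A height function is $h:P\to\mathbb{N}$ with $h(x)<h(y)$ whenever $y$ covers $x$. For a tuple $a$ of $k$ distinct nonnegative integers, $\mathsf{E}_a\in\mathbb{Q}(q)[x]$ is the unique polynomial with $\mathsf{E}_a([n]_q)=\sum_{m\in\mathbb{N}^k,\sum m_i=n}q^{\sum a_im_i}$ for $n\ge0$. The $q$-Zeta polynomial is $\mathsf{Z}_{P,h}(x)=\sum_{k\ge1}\sum_{c_1<\cdots<c_k\text{ in }P}q^{\sum_i h(c_i)}\mathsf{E}_{(h(c_1),\dots,h(c_k))}((x-[k+1]_q)/q^{k+1})$; it is the unique polynomial with $\mathsf{Z}_{P,h}([n]_q)=\sum_{e_1\le\cdots\le e_{n-1}}q^{\sum_j h(e_j)}$ for all $n\ge2$. *)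

theory Defs
  imports "HOL-Computational_Algebra.Polynomial" "HOL-Computational_Algebra.Fraction_Field"
begin

type_synonym qfun = "rat poly fract"

definition qvar :: qfun where
  "qvar = Fract [:0, 1:] 1"

definition qint :: "int \<Rightarrow> qfun" where
  "qint n = (qvar powi n - 1) / (qvar - 1)"

definition qE :: "nat list \<Rightarrow> qfun poly" where
  "qE a = (THE p. \<forall>n::nat. poly p (qint (int n)) =
      (\<Sum>m\<in>{m :: nat list. length m = length a \<and> sum_list m = n}.
          qvar ^ (\<Sum>i<length a. a ! i * m ! i)))"

definition covers_in :: "'a::order set \<Rightarrow> 'a \<Rightarrow> 'a \<Rightarrow> bool" where
  "covers_in P x y \<longleftrightarrow> x \<in> P \<and> y \<in> P \<and> x < y \<and> \<not> (\<exists>z\<in>P. x < z \<and> z < y)"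

definition height_function :: "'a::order set \<Rightarrow> ('a \<Rightarrow> nat) \<Rightarrow> bool" where
  "height_function P h \<longleftrightarrow> (\<forall>x y. covers_in P x y \<longrightarrow> h x < h y)"

definition chains_in :: "'a::order set \<Rightarrow> 'a list set" where
  "chains_in P = {cs. cs \<noteq> [] \<and> set cs \<subseteq> P \<and> sorted_wrt (<) cs}"

definition qZeta :: "'a::order set \<Rightarrow> ('a \<Rightarrow> nat) \<Rightarrow> qfun poly" where
  "qZeta P h = (\<Sum>cs\<in>chains_in P.
      let k = length cs in
      smult (qvar ^ sum_list (map h cs))
        (pcompose (qE (map h cs))
           [: - qint (int k + 1) / qvar ^ (k + 1), 1 / qvar ^ (k + 1) :]))"

text \<open>Moebius function of the poset P (recursion with fuel card P, which suffices
  since every strict chain in P has at most card P elements).\<close>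
fun mob_aux :: "nat \<Rightarrow> 'a::order set \<Rightarrow> 'a \<Rightarrow> 'a \<Rightarrow> int" where
  "mob_aux 0 P x y = (if x = y then 1 else 0)"
| "mob_aux (Suc n) P x y =
     (if x = y then 1
      else if x < y then - (\<Sum>z\<in>{z\<in>P. x \<le> z \<and> z < y}. mob_aux n P x z)
      else 0)"

definition moebius :: "'a::order set \<Rightarrow> 'a \<Rightarrow> 'a \<Rightarrow> int" where
  "moebius P x y = mob_aux (card P) P x y"

end

theory Submission
  imports Defs
begin

text \<open>For a chain with heights a_1 < ... < a_k, the sum defining E_a([n]_q) is the complete
  homogeneous symmetric polynomial h_n(q^a_1, ..., q^a_k) (complete_hom), so E_a is a polynomial
  R_a (qcomplete_poly a) in z = 1 + (q - 1) x = q^n. The recursion of h_n becomes the q-difference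
  equation R_(b#a)(z) = q^b R_(b#a)(z/q) + R_a(z), which continues R_a to z = q^-j: it vanishes
  for 0 < j < k and equals (-1)^(k-1) y_1 ... y_k h_i(y) at j = k + i, where y_l = q^-a_l.
  At x = [-1]_q the summand of a chain is evaluated at z = q^-(k+2), and its prefactor
  q^(a_1 + ... + a_k) cancels the product, so Z_(P,h)([-1]_q) is the sum over chains c of
  (-1)^(k-1) h_2(w(c)) with w = q^-h.

  Let S_j(y) (signed_chain_sum) be the signed sum of h_j(w(c)) over chains c with top element y.
  Removing y from a chain gives S_0(y) = 1 - sum_(z<y) S_0(z) and
  S_(j+1)(y) = w(y) S_j(y) - sum_(z<y) S_(j+1)(z). Hence S_0 is the indicator of the bottom
  element 0, S_1(y) = w(0) mu(0, y) by the defining recursion of mu, and the sum of h_2 over all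
  chains is S_2(1) + sum_(z<1) S_2(z) = w(1) S_1(1) = w(0) w(1) mu(0, 1).\<close>

abbreviation q :: qfun where "q \<equiv> qvar"

lemma qvar_power: "q ^ n = Fract ([:0, 1:] ^ n) 1"
  by (induction n) (simp_all add: qvar_def One_fract_def)

lemma qvar_power_eq_iff [simp]: "q ^ m = q ^ n \<longleftrightarrow> m = n"
proof
  assume "q ^ m = q ^ n"
  then have "[:0, 1::rat:] ^ m = [:0, 1:] ^ n"
    by (simp add: qvar_power eq_fract)
  then have "degree ([:0, 1::rat:] ^ m) = degree ([:0, 1::rat:] ^ n)" by simp
  then show "m = n" by (simp add: degree_power_eq)
qed simp

lemma qvar_nonzero [simp]: "q \<noteq> 0"
  using qvar_power_eq_iff[of 1 2] by (auto simp del: qvar_power_eq_iff)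

lemma inj_qvar_power: "inj (\<lambda>n. q ^ n)"
  by (rule injI) simp

lemma poly_eqI_inj_seq:
  fixes p r :: "'a::idom poly"
  assumes "inj f" and "\<And>n::nat. poly p (f n) = poly r (f n)"
  shows "p = r"
proof (rule ccontr)
  assume "p \<noteq> r"
  then have "finite {x. poly (p - r) x = 0}" by (intro poly_roots_finite) simp
  moreover have "range f \<subseteq> {x. poly (p - r) x = 0}" using assms(2) by auto
  ultimately show False
    using \<open>inj f\<close> by (metis finite_imageD finite_subset infinite_UNIV_nat inj_on_subset subset_UNIV)
qed

fun complete_hom :: "nat \<Rightarrow> 'a::comm_semiring_1 list \<Rightarrow> 'a" where
  "complete_hom 0 xs = 1"
| "complete_hom (Suc n) [] = 0"
| "complete_hom (Suc n) (x # xs) = x * complete_hom n (x # xs) + complete_hom (Suc n) xs"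

lemma complete_hom_Nil: "complete_hom n [] = (if n = 0 then 1 else 0)"
  by (cases n) simp_all

lemma complete_hom_single [simp]: "complete_hom n [x] = x ^ n"
  by (induction n) simp_all

lemma complete_hom_Cons_sum: "complete_hom n (x # xs) = (\<Sum>j\<le>n. x ^ j * complete_hom (n - j) xs)"
proof (induction n)
  case (Suc n)
  have "complete_hom (Suc n) (x # xs) = (\<Sum>j\<le>n. x ^ Suc j * complete_hom (n - j) xs) + complete_hom (Suc n) xs"
    by (simp add: Suc sum_distrib_left mult.assoc)
  also have "\<dots> = (\<Sum>j\<le>Suc n. x ^ j * complete_hom (Suc n - j) xs)"
    by (subst sum.atMost_Suc_shift) (simp add: add.commute)
  finally show ?case .
qed simp

lemma complete_hom_snoc: "complete_hom (Suc n) (xs @ [v]) = v * complete_hom n (xs @ [v]) + complete_hom (Suc n) xs"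
proof (induction xs arbitrary: n)
  case (Cons x xs)
  show ?case
  proof (induction n)
    case (Suc n)
    have "complete_hom (Suc (Suc n)) ((x # xs) @ [v])
        = x * complete_hom (Suc n) ((x # xs) @ [v]) + complete_hom (Suc (Suc n)) (xs @ [v])"
      by simp
    also have "\<dots> = x * (v * complete_hom n ((x # xs) @ [v]) + complete_hom (Suc n) (x # xs))
          + (v * complete_hom (Suc n) (xs @ [v]) + complete_hom (Suc (Suc n)) xs)"
      by (simp only: Suc.IH Cons.IH)
    also have "\<dots> = v * (x * complete_hom n ((x # xs) @ [v]) + complete_hom (Suc n) (xs @ [v]))
          + (x * complete_hom (Suc n) (x # xs) + complete_hom (Suc (Suc n)) xs)"
      by (simp add: algebra_simps del: complete_hom.simps)
    finally show ?case by simp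
  qed (simp add: Cons add.left_commute)
qed simp

definition weak_compositions :: "nat \<Rightarrow> nat \<Rightarrow> nat list set" where
  "weak_compositions k n = {m. length m = k \<and> sum_list m = n}"

lemma finite_weak_compositions [simp]: "finite (weak_compositions k n)"
proof (rule finite_subset)
  show "weak_compositions k n \<subseteq> {m. set m \<subseteq> {..n} \<and> length m = k}"
    by (auto simp: weak_compositions_def member_le_sum_list)
qed (simp add: finite_lists_length_eq)

lemma weak_compositions_Suc:
  "weak_compositions (Suc k) n = (\<Union>j\<le>n. (#) j ` weak_compositions k (n - j))"
  by (fastforce simp: weak_compositions_def length_Suc_conv)

lemma complete_hom_eq_sum_weak_compositions:
  "complete_hom n xs = (\<Sum>m\<in>weak_compositions (length xs) n. \<Prod>i<length xs. xs ! i ^ m ! i)"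
proof (induction xs arbitrary: n)
  case Nil
  have "weak_compositions 0 n = (if n = 0 then {[]} else {})"
    by (auto simp: weak_compositions_def)
  then show ?case by (simp add: complete_hom_Nil)
next
  case (Cons x xs)
  have "(\<Sum>m\<in>weak_compositions (length (x # xs)) n. \<Prod>i<length (x # xs). (x # xs) ! i ^ m ! i)
      = (\<Sum>j\<le>n. \<Sum>m\<in>(#) j ` weak_compositions (length xs) (n - j).
           \<Prod>i<Suc (length xs). (x # xs) ! i ^ m ! i)"
    unfolding weak_compositions_Suc length_Cons
    by (rule sum.UNION_disjoint) auto
  also have "\<dots> = (\<Sum>j\<le>n. x ^ j * complete_hom (n - j) xs)"
    by (simp add: sum.reindex Cons prod.lessThan_Suc_shift sum_distrib_left
        del: prod.lessThan_Suc)
  finally show ?case by (simp add: complete_hom_Cons_sum)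
qed

lemma poly_affine_qint: "poly [:1, q - 1:] (qint n) = q powi n"
  by (simp add: qint_def)

lemma inj_qint_of_nat: "inj (\<lambda>n. qint (int n))"
proof (rule injI)
  fix m n assume "qint (int m) = qint (int n)"
  then have "poly [:1, q - 1:] (qint (int m)) = poly [:1, q - 1:] (qint (int n))" by simp
  then show "m = n" by (simp only: poly_affine_qint power_int_of_nat qvar_power_eq_iff)
qed

lemma q_difference_equation_solvable:
  assumes "coeff r b = 0"
  obtains s where "\<And>z. poly s z - q ^ b * poly s (z / q) = poly r z"
    and "\<And>d. coeff r d = 0 \<Longrightarrow> coeff s d = 0"
proof
  define c where "c d = coeff r d / (1 - q ^ b / q ^ d)" for d
  define s where "s = (\<Sum>d\<le>degree r. monom (c d) d)"
  have coeff_solution: "c d * (1 - q ^ b / q ^ d) = coeff r d" for d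
  proof (cases "d = b")
    case False
    then have "1 - q ^ b / q ^ d \<noteq> 0" by (simp add: field_simps)
    then show ?thesis by (simp add: c_def)
  qed (simp add: assms c_def)
  fix z
  have "poly s z - q ^ b * poly s (z / q) = (\<Sum>d\<le>degree r. c d * (1 - q ^ b / q ^ d) * z ^ d)"
    by (simp add: s_def poly_sum poly_monom sum_distrib_left power_divide
        flip: sum_subtractf) (simp add: field_simps)
  also have "\<dots> = poly r z"
    by (simp add: coeff_solution poly_altdef)
  finally show "poly s z - q ^ b * poly s (z / q) = poly r z" .
next
  fix d assume "coeff r d = 0"
  then show "coeff (\<Sum>d\<le>degree r. monom (coeff r d / (1 - q ^ b / q ^ d)) d) d = 0"
    by (simp add: coeff_sum coeff_monom)
qed

lemma q_difference_equation_normalized_solution: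
  assumes "coeff r b = 0"
  obtains s where "\<And>z. poly s z = q ^ b * poly s (z / q) + poly r z" and "poly s 1 = 1"
    and "\<And>d. coeff r d = 0 \<Longrightarrow> d \<noteq> b \<Longrightarrow> coeff s d = 0"
proof -
  obtain s0 where s0_eq: "\<And>z. poly s0 z - q ^ b * poly s0 (z / q) = poly r z"
    and s0_support: "\<And>d. coeff r d = 0 \<Longrightarrow> coeff s0 d = 0"
    using q_difference_equation_solvable[OF assms] by blast
  \<comment> \<open>the monomial \<open>z ^ b\<close> solves the homogeneous equation and fixes the value at \<open>z = 1\<close>\<close>
  define s where "s = s0 + smult (1 - poly s0 1) (monom 1 b)"
  have "poly s z = q ^ b * poly s (z / q) + poly r z" for z
  proof -
    have "q ^ b * (z / q) ^ b = z ^ b" by (simp add: power_divide)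
    with s0_eq[of z] show ?thesis by (simp add: s_def poly_monom algebra_simps)
  qed
  moreover have "poly s 1 = 1" by (simp add: s_def poly_monom)
  moreover have "coeff s d = 0" if "coeff r d = 0" "d \<noteq> b" for d
    using that s0_support by (simp add: s_def coeff_monom)
  ultimately show ?thesis by (rule that)
qed

lemma qcomplete_poly_exists:
  "distinct a \<Longrightarrow> a \<noteq> [] \<Longrightarrow>
     \<exists>r. (\<forall>n. poly r (q ^ n) = complete_hom n (map ((^) q) a)) \<and> (\<forall>d. coeff r d \<noteq> 0 \<longrightarrow> d \<in> set a)"
proof (induction a)
  case (Cons b a)
  show ?case
  proof (cases "a = []")
    case True
    have "poly (monom 1 b) (q ^ n) = complete_hom n (map ((^) q) [b])" for n
      by (simp add: poly_monom mult.commute flip: power_mult)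
    then show ?thesis
      using True by (intro exI[of _ "monom 1 b"]) (simp add: coeff_monom)
  next
    case False
    obtain r' where r'_values: "\<forall>n. poly r' (q ^ n) = complete_hom n (map ((^) q) a)"
      and r'_support: "\<forall>d. coeff r' d \<noteq> 0 \<longrightarrow> d \<in> set a"
      using Cons False by auto
    have "coeff r' b = 0" using r'_support Cons.prems(1) by auto
    then obtain r where r_eq: "\<And>z. poly r z = q ^ b * poly r (z / q) + poly r' z"
      and "poly r 1 = 1" and r_support: "\<And>d. coeff r' d = 0 \<Longrightarrow> d \<noteq> b \<Longrightarrow> coeff r d = 0"
      using q_difference_equation_normalized_solution by blast
    have "poly r (q ^ n) = complete_hom n (map ((^) q) (b # a))" for n
    proof (induction n)
      case 0
      show ?case using \<open>poly r 1 = 1\<close> by simp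
    next
      case (Suc n)
      show ?case using r_eq[of "q ^ Suc n"] Suc r'_values[rule_format, of "Suc n"] by simp
    qed
    moreover have "coeff r d \<noteq> 0 \<longrightarrow> d \<in> set (b # a)" for d
      using r'_support r_support by auto
    ultimately show ?thesis by blast
  qed
qed simp

text \<open>Such a polynomial exists only for distinct nonempty \<open>a\<close>; otherwise \<open>THE\<close> yields junk.\<close>
definition qcomplete_poly :: "nat list \<Rightarrow> qfun poly" where
  "qcomplete_poly a = (THE r. \<forall>n. poly r (q ^ n) = complete_hom n (map ((^) q) a))"

lemma poly_qcomplete_poly:
  assumes "distinct a" "a \<noteq> []"
  shows "poly (qcomplete_poly a) (q ^ n) = complete_hom n (map ((^) q) a)"
proof -
  obtain r where r: "\<forall>n. poly r (q ^ n) = complete_hom n (map ((^) q) a)"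
    using qcomplete_poly_exists[OF assms] by blast
  have "qcomplete_poly a = r"
    unfolding qcomplete_poly_def
    by (rule the_equality) (use r poly_eqI_inj_seq[OF inj_qvar_power] in auto)
  with r show ?thesis by simp
qed

lemma poly_qcomplete_poly_one:
  "distinct a \<Longrightarrow> a \<noteq> [] \<Longrightarrow> poly (qcomplete_poly a) 1 = 1"
  using poly_qcomplete_poly[of a 0] by simp

lemma qcomplete_poly_single: "qcomplete_poly [b] = monom 1 b"
  by (rule poly_eqI_inj_seq[OF inj_qvar_power])
    (simp add: poly_qcomplete_poly poly_monom mult.commute flip: power_mult)

lemma poly_qcomplete_poly_Cons:
  assumes "distinct (b # a)" "a \<noteq> []"
  shows "poly (qcomplete_poly (b # a)) z
    = q ^ b * poly (qcomplete_poly (b # a)) (z / q) + poly (qcomplete_poly a) z"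
proof -
  let ?R = "qcomplete_poly (b # a)"
  have shift: "poly (pcompose p [:0, 1 / q:]) x = poly p (x / q)" for p x
    by (simp add: poly_pcompose divide_inverse)
  have "?R = smult (q ^ b) (pcompose ?R [:0, 1 / q:]) + qcomplete_poly a"
  proof (rule poly_eqI_inj_seq)
    show "inj (\<lambda>n. q ^ Suc n)" by (rule injI) simp
    fix n
    show "poly ?R (q ^ Suc n)
        = poly (smult (q ^ b) (pcompose ?R [:0, 1 / q:]) + qcomplete_poly a) (q ^ Suc n)"
      using assms poly_qcomplete_poly[of "b # a" "Suc n"] poly_qcomplete_poly[of a "Suc n"]
        poly_qcomplete_poly[of "b # a" n]
      by (simp add: shift)
  qed
  then have "poly ?R z = poly (smult (q ^ b) (pcompose ?R [:0, 1 / q:]) + qcomplete_poly a) z"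
    by (rule arg_cong)
  then show ?thesis by (simp add: shift)
qed

lemma sum_weak_compositions_qvar_power:
  "(\<Sum>m\<in>weak_compositions (length a) n. q ^ (\<Sum>i<length a. a ! i * m ! i))
     = complete_hom n (map ((^) q) a)"
  by (simp add: complete_hom_eq_sum_weak_compositions power_sum power_mult)

lemma qE_eq_pcompose_qcomplete_poly:
  assumes "distinct a" "a \<noteq> []"
  shows "qE a = pcompose (qcomplete_poly a) [:1, q - 1:]"
proof -
  let ?E = "pcompose (qcomplete_poly a) [:1, q - 1:]"
  have at_qint: "poly ?E (qint (int n)) = complete_hom n (map ((^) q) a)" for n
    using poly_affine_qint[of "int n"]
    by (simp only: poly_pcompose power_int_of_nat poly_qcomplete_poly[OF assms])
  show ?thesis
    unfolding qE_def sum_weak_compositions_qvar_power[unfolded weak_compositions_def]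
  proof (rule the_equality)
    fix p assume "\<forall>n. poly p (qint (int n)) = complete_hom n (map ((^) q) a)"
    then show "p = ?E"
      using at_qint by (intro poly_eqI_inj_seq[OF inj_qint_of_nat]) simp
  qed (simp add: at_qint)
qed

lemma poly_qcomplete_poly_Cons_inverse_power:
  assumes "distinct (b # a)" "a \<noteq> []"
  shows "poly (qcomplete_poly (b # a)) (1 / q ^ Suc j)
    = 1 / q ^ b * (poly (qcomplete_poly (b # a)) (1 / q ^ j) - poly (qcomplete_poly a) (1 / q ^ j))"
  using poly_qcomplete_poly_Cons[OF assms, of "1 / q ^ j"] by (simp add: field_simps)

lemma poly_qcomplete_poly_inverse_power_eq_0:
  "distinct a \<Longrightarrow> 1 \<le> j \<Longrightarrow> j < length a \<Longrightarrow> poly (qcomplete_poly a) (1 / q ^ j) = 0"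
proof (induction a arbitrary: j)
  case (Cons b a)
  then have "a \<noteq> []" by auto
  have "poly (qcomplete_poly (b # a)) (1 / q ^ j) = 0" if "1 \<le> j" "j \<le> length a" for j
    using that
  proof (induction j)
    case (Suc j)
    then show ?case
      using Cons.IH[of j] Cons.prems(1) \<open>a \<noteq> []\<close>
        poly_qcomplete_poly_Cons_inverse_power[OF Cons.prems(1) \<open>a \<noteq> []\<close>, of j]
      by (cases "j = 0") (simp_all add: poly_qcomplete_poly_one)
  qed simp
  with Cons.prems show ?case by simp
qed simp

lemma poly_qcomplete_poly_inverse_power_length_add:
  assumes "distinct a" "a \<noteq> []"
  shows "poly (qcomplete_poly a) (1 / q ^ (length a + j))
    = (-1) ^ (length a - 1) * prod_list (map (\<lambda>d. 1 / q ^ d) a) * complete_hom j (map (\<lambda>d. 1 / q ^ d) a)"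
  using assms
proof (induction a arbitrary: j)
  case (Cons b a)
  show ?case
  proof (cases "a = []")
    case True
    then show ?thesis
      by (simp add: qcomplete_poly_single poly_monom power_divide power_mult_distrib
          flip: power_mult)
  next
    case False
    let ?F = "\<lambda>j. poly (qcomplete_poly (b # a)) (1 / q ^ j)"
    let ?y = "map (\<lambda>d. 1 / q ^ d) a" and ?yb = "1 / q ^ b"
    obtain m where m: "length a = Suc m" using False by (cases a) auto
    have distinct: "distinct a" using Cons.prems by simp
    have step: "?F (Suc (length a + j))
        = ?yb * (?F (length a + j) - poly (qcomplete_poly a) (1 / q ^ (length a + j)))" for j
      by (rule poly_qcomplete_poly_Cons_inverse_power[OF Cons.prems(1) False])
    have tail: "poly (qcomplete_poly a) (1 / q ^ (length a + j))
        = (-1) ^ m * prod_list ?y * complete_hom j ?y" for j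
      using Cons.IH[OF distinct False] m by simp
    have "?F (length a) = 0"
      using poly_qcomplete_poly_inverse_power_eq_0[OF Cons.prems(1), of "length a"] m by simp
    have "?F (Suc (length a + j)) = (-1) ^ Suc m * (?yb * prod_list ?y) * complete_hom j (?yb # ?y)" for j
    proof (induction j)
      case 0
      show ?case using step[of 0] tail[of 0] \<open>?F (length a) = 0\<close> by simp
    next
      case (Suc j)
      show ?case using step[of "Suc j"] tail[of "Suc j"] Suc by (simp add: algebra_simps)
    qed
    then show ?thesis using m by simp
  qed
qed simp

lemma qvar_power_sum_list_mult_prod_inverse: "q ^ sum_list a * prod_list (map (\<lambda>d. 1 / q ^ d) a) = 1"
  by (induction a) (simp_all add: power_add field_simps)

lemma poly_qZeta_summand_qint_minus_one:
  assumes "distinct a" "a \<noteq> []"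
  defines "k \<equiv> length a"
  shows "poly (smult (q ^ sum_list a) (pcompose (qE a)
           [: - qint (int k + 1) / q ^ (k + 1), 1 / q ^ (k + 1) :])) (qint (-1))
         = (-1) ^ (k - 1) * complete_hom 2 (map (\<lambda>d. 1 / q ^ d) a)"
proof -
  have "poly [:1, q - 1:] ((qint (-1) - qint (int (k + 1))) / q ^ (k + 1))
      = 1 + (poly [:1, q - 1:] (qint (-1)) - poly [:1, q - 1:] (qint (int (k + 1)))) / q ^ (k + 1)"
    by (simp add: field_simps)
  also have "\<dots> = 1 / q ^ (k + 2)"
    by (simp only: poly_affine_qint power_int_of_nat) (simp add: field_simps)
  finally have argument: "poly [:1, q - 1:] ((qint (-1) - qint (int k + 1)) / q ^ (k + 1))
      = 1 / q ^ (k + 2)" by (simp add: add.commute)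
  have "poly (smult (q ^ sum_list a) (pcompose (qE a)
           [: - qint (int k + 1) / q ^ (k + 1), 1 / q ^ (k + 1) :])) (qint (-1))
      = q ^ sum_list a * poly (qcomplete_poly a) (1 / q ^ (k + 2))"
    using argument
    by (simp add: qE_eq_pcompose_qcomplete_poly[OF assms(1,2)] poly_pcompose diff_divide_distrib)
  also have "\<dots> = (-1) ^ (k - 1) * complete_hom 2 (map (\<lambda>d. 1 / q ^ d) a)"
    using poly_qcomplete_poly_inverse_power_length_add[OF assms(1,2), of 2]
      qvar_power_sum_list_mult_prod_inverse[of a]
    by (simp add: k_def)
  finally show ?thesis .
qed

lemma card_strict_lower_set_less:
  fixes P :: "'a::order set"
  assumes "finite P" "z \<in> P" "z < y"
  shows "card {u\<in>P. u < z} < card {u\<in>P. u < y}"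
  using assms by (intro psubset_card_mono) (auto intro: less_trans)

lemma finite_less_induct [consumes 2, case_names less]:
  fixes P :: "'a::order set"
  assumes "finite P" "y \<in> P"
    and "\<And>y. y \<in> P \<Longrightarrow> (\<And>z. z \<in> P \<Longrightarrow> z < y \<Longrightarrow> Q z) \<Longrightarrow> Q y"
  shows "Q y"
  using assms(2)
proof (induction "card {z\<in>P. z < y}" arbitrary: y rule: less_induct)
  case less
  then show ?case
    using assms(3) card_strict_lower_set_less[OF assms(1)] by blast
qed

lemma height_function_strict_mono_on:
  assumes "finite P" and height: "height_function P h"
  shows "strict_mono_on P h"
proof -
  have "h x < h y" if "y \<in> P" "x \<in> P" "x < y" for x y
    using assms(1) that
  proof (induction y arbitrary: x rule: finite_less_induct)
    case (less y)
    let ?I = "{u\<in>P. x \<le> u \<and> u < y}"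
    obtain z where z: "z \<in> ?I" and z_max: "\<forall>u\<in>?I. z \<le> u \<longrightarrow> z = u"
      using finite_has_maximal[of ?I] assms(1) less.prems by auto
    have "covers_in P z y"
      using z z_max less.hyps by (fastforce simp: covers_in_def)
    then have "h z < h y" using height by (simp add: height_function_def)
    moreover have "h x \<le> h z"
      using less.IH[of z x] z less.prems(1) by (cases "x = z") (auto simp: order.order_iff_strict)
    ultimately show ?case by simp
  qed
  then show ?thesis by (auto simp: strict_mono_on_def)
qed

lemma poly_qZeta_qint_minus_one:
  assumes "finite P" "height_function P h"
  shows "poly (qZeta P h) (qint (-1))
    = (\<Sum>c\<in>chains_in P. (-1) ^ (length c - 1) * complete_hom 2 (map (\<lambda>x. 1 / q ^ h x) c))"
  unfolding qZeta_def poly_sum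
proof (rule sum.cong)
  fix c assume c: "c \<in> chains_in P"
  then have "sorted_wrt (<) (map h c)"
    using height_function_strict_mono_on[OF assms]
    by (auto simp: chains_in_def strict_mono_on_def intro: sorted_wrt_map_mono)
  then have "distinct (map h c)" by (simp add: strict_sorted_iff)
  moreover have "map h c \<noteq> []" using c by (simp add: chains_in_def)
  ultimately have "poly (smult (q ^ sum_list (map h c)) (pcompose (qE (map h c))
      [: - qint (int (length c) + 1) / q ^ (length c + 1), 1 / q ^ (length c + 1) :])) (qint (-1))
      = (-1) ^ (length c - 1) * complete_hom 2 (map (\<lambda>x. 1 / q ^ h x) c)"
    using poly_qZeta_summand_qint_minus_one[of "map h c"] by (simp add: comp_def)
  then show "poly (let k = length c in smult (q ^ sum_list (map h c))
        (pcompose (qE (map h c)) [:- qint (int k + 1) / q ^ (k + 1), 1 / q ^ (k + 1):])) (qint (-1))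
      = (-1) ^ (length c - 1) * complete_hom 2 (map (\<lambda>x. 1 / q ^ h x) c)"
    by (simp only: Let_def)
qed simp

lemma sorted_wrt_less_distinct: "sorted_wrt (<) (xs :: 'a::order list) \<Longrightarrow> distinct xs"
  by (induction xs) auto

lemma sorted_wrt_less_le_last: "sorted_wrt (<) (xs :: 'a::order list) \<Longrightarrow> x \<in> set xs \<Longrightarrow> x \<le> last xs"
  by (induction xs) (auto simp: less_imp_le)

lemma finite_chains_in:
  assumes "finite P"
  shows "finite (chains_in P)"
proof (rule finite_subset)
  show "chains_in P \<subseteq> {xs. set xs \<subseteq> P \<and> length xs \<le> card P}"
  proof
    fix c assume "c \<in> chains_in P"
    then have "distinct c" "set c \<subseteq> P"
      using sorted_wrt_less_distinct by (auto simp: chains_in_def)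
    then show "c \<in> {xs. set xs \<subseteq> P \<and> length xs \<le> card P}"
      using assms by (metis card_mono distinct_card mem_Collect_eq)
  qed
  show "finite {xs. set xs \<subseteq> P \<and> length xs \<le> card P}"
    using assms by (rule finite_lists_length_le)
qed

definition chains_ending :: "'a::order set \<Rightarrow> 'a \<Rightarrow> 'a list set" where
  "chains_ending P y = {c \<in> chains_in P. last c = y}"

lemma chains_ending_nonempty: "c \<in> chains_ending P y \<Longrightarrow> c \<noteq> []"
  by (simp add: chains_ending_def chains_in_def)

lemma sum_chains_in_by_last:
  "finite P \<Longrightarrow> (\<Sum>c\<in>chains_in P. f c) = (\<Sum>y\<in>P. \<Sum>c\<in>chains_ending P y. f c)"
  unfolding chains_ending_def using finite_chains_in[of P]
  by (intro sum.group[symmetric]) (auto simp: chains_in_def)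

lemma chains_ending_eq:
  assumes "y \<in> P"
  shows "chains_ending P y
    = insert [y] (\<Union>z\<in>{z\<in>P. z < y}. (\<lambda>c. c @ [y]) ` chains_ending P z)"
proof (intro equalityI subsetI)
  fix c assume "c \<in> chains_ending P y"
  then have c: "c \<noteq> []" "last c = y" "set c \<subseteq> P" "sorted_wrt (<) c"
    by (auto simp: chains_ending_def chains_in_def)
  define c' where "c' = butlast c"
  have c_eq: "c = c' @ [y]"
    using c(1,2) append_butlast_last_id[of c] by (simp add: c'_def)
  show "c \<in> insert [y] (\<Union>z\<in>{z\<in>P. z < y}. (\<lambda>c. c @ [y]) ` chains_ending P z)"
  proof (cases "c' = []")
    case False
    have "sorted_wrt (<) c'" "\<forall>x\<in>set c'. x < y" "set c' \<subseteq> P"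
      using c(3,4) unfolding c_eq by (simp_all add: sorted_wrt_append)
    with False have "c' \<in> chains_ending P (last c')" "last c' \<in> P" "last c' < y"
      by (auto simp: chains_ending_def chains_in_def)
    with c_eq show ?thesis by blast
  qed (simp add: c_eq)
next
  fix c assume "c \<in> insert [y] (\<Union>z\<in>{z\<in>P. z < y}. (\<lambda>c. c @ [y]) ` chains_ending P z)"
  then consider "c = [y]"
    | z c' where "z \<in> P" "z < y" "c' \<in> chains_ending P z" "c = c' @ [y]"
    by blast
  then show "c \<in> chains_ending P y"
  proof cases
    case 1
    with assms show ?thesis by (simp add: chains_ending_def chains_in_def)
  next
    case 2
    then have "\<forall>x\<in>set c'. x < y"
      using sorted_wrt_less_le_last by (fastforce simp: chains_ending_def chains_in_def
          intro: le_less_trans)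
    with 2 assms show ?thesis
      by (auto simp: chains_ending_def chains_in_def sorted_wrt_append)
  qed
qed

lemma sum_chains_ending:
  assumes "finite P" "y \<in> P"
  shows "(\<Sum>c\<in>chains_ending P y. f c)
    = f [y] + (\<Sum>z\<in>{z\<in>P. z < y}. \<Sum>c\<in>chains_ending P z. f (c @ [y]))"
proof -
  have finite: "finite (chains_ending P z)" for z
    using finite_chains_in[OF assms(1)] by (simp add: chains_ending_def)
  have "[y] \<notin> (\<Union>z\<in>{z\<in>P. z < y}. (\<lambda>c. c @ [y]) ` chains_ending P z)"
    using chains_ending_nonempty by blast
  moreover have "(\<lambda>c. c @ [y]) ` chains_ending P z \<inter> (\<lambda>c. c @ [y]) ` chains_ending P z' = {}"
    if "z \<noteq> z'" for z z'
    using that by (auto simp: chains_ending_def)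
  ultimately show ?thesis
    unfolding chains_ending_eq[OF assms(2)]
    using assms(1) finite
    by (simp add: sum.UNION_disjoint sum.reindex inj_on_def)
qed

definition signed_chain_sum :: "'a::order set \<Rightarrow> ('a \<Rightarrow> 'b::comm_ring_1) \<Rightarrow> nat \<Rightarrow> 'a \<Rightarrow> 'b" where
  "signed_chain_sum P w j y = (\<Sum>c\<in>chains_ending P y. (-1) ^ (length c - 1) * complete_hom j (map w c))"

lemma minus_one_power_length:
  "xs \<noteq> [] \<Longrightarrow> (- 1 :: 'b::ring_1) ^ length xs = - ((- 1) ^ (length xs - 1))"
  by (cases xs) simp_all

lemma signed_chain_sum_0_rec:
  assumes "finite P" "y \<in> P"
  shows "signed_chain_sum P w 0 y = 1 - (\<Sum>z\<in>{z\<in>P. z < y}. signed_chain_sum P w 0 z)"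
  unfolding signed_chain_sum_def sum_chains_ending[OF assms]
  by (simp add: minus_one_power_length chains_ending_nonempty sum_negf cong: sum.cong)

lemma signed_chain_sum_Suc_rec:
  assumes "finite P" "y \<in> P"
  shows "signed_chain_sum P w (Suc j) y
    = w y * signed_chain_sum P w j y - (\<Sum>z\<in>{z\<in>P. z < y}. signed_chain_sum P w (Suc j) z)"
proof -
  define f where "f i c = (-1) ^ (length c - 1) * complete_hom i (map w c)" for i c
  have f_snoc: "f (Suc j) (c @ [y]) = w y * f j (c @ [y]) - f (Suc j) c" if "c \<noteq> []" for c
    using minus_one_power_length[OF that, where 'b='b] by (simp add: f_def complete_hom_snoc algebra_simps)
  have "signed_chain_sum P w (Suc j) y
      = f (Suc j) [y] + (\<Sum>z\<in>{z\<in>P. z < y}. \<Sum>c\<in>chains_ending P z. f (Suc j) (c @ [y]))"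
    unfolding signed_chain_sum_def f_def[symmetric] by (rule sum_chains_ending[OF assms])
  also have "\<dots> = w y * f j [y] + (\<Sum>z\<in>{z\<in>P. z < y}. \<Sum>c\<in>chains_ending P z.
      w y * f j (c @ [y]) - f (Suc j) c)"
    by (intro arg_cong2[where f = "(+)"] sum.cong refl)
      (auto simp: f_def[of _ "[y]"] f_snoc dest: chains_ending_nonempty)
  also have "\<dots> = w y * (f j [y] + (\<Sum>z\<in>{z\<in>P. z < y}. \<Sum>c\<in>chains_ending P z. f j (c @ [y])))
      - (\<Sum>z\<in>{z\<in>P. z < y}. \<Sum>c\<in>chains_ending P z. f (Suc j) c)"
    by (simp only: sum_subtractf sum_distrib_left distrib_left add_diff_eq)
  also have "\<dots> = w y * signed_chain_sum P w j y - (\<Sum>z\<in>{z\<in>P. z < y}. signed_chain_sum P w (Suc j) z)"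
    unfolding signed_chain_sum_def f_def[symmetric] sum_chains_ending[OF assms] ..
  finally show ?thesis .
qed

lemma signed_chain_sum_0:
  fixes P :: "'a::order set" and bot :: 'a
  assumes "finite P" "bot \<in> P" "\<forall>x\<in>P. bot \<le> x" "y \<in> P"
  shows "signed_chain_sum P w 0 y = (if y = bot then 1 else 0)"
  using assms(1,4)
proof (induction y rule: finite_less_induct)
  case (less y)
  have "(\<Sum>z\<in>{z\<in>P. z < y}. signed_chain_sum P w 0 z) = (\<Sum>z\<in>{z\<in>P. z < y}. if z = bot then 1 else 0)"
    using less.IH by (intro sum.cong) auto
  also have "\<dots> = (if y = bot then 0 else 1)"
    using assms less.hyps by (auto simp: sum.delta' order.order_iff_strict)
  finally show ?case
    unfolding signed_chain_sum_0_rec[OF assms(1) less.hyps] by simp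
qed

lemma mob_aux_refl [simp]: "mob_aux n P x x = 1"
  by (cases n) simp_all

lemma mob_aux_fuel_independent:
  fixes P :: "'a::order set"
  assumes "finite P" "y \<in> P"
  shows "card {z\<in>P. z < y} < m \<Longrightarrow> card {z\<in>P. z < y} < n \<Longrightarrow> mob_aux m P x y = mob_aux n P x y"
  using assms
proof (induction y arbitrary: m n rule: finite_less_induct)
  case (less y)
  obtain m' n' where m: "m = Suc m'" and n: "n = Suc n'"
    using less.prems by (cases m; cases n) auto
  have "mob_aux m' P x z = mob_aux n' P x z" if "z \<in> P" "z < y" for z
  proof (rule less.IH[OF that])
    show "card {u\<in>P. u < z} < m'" "card {u\<in>P. u < z} < n'"
      using card_strict_lower_set_less[OF assms(1) that] less.prems m n by simp_all
  qed
  then have "(\<Sum>z\<in>{z\<in>P. x \<le> z \<and> z < y}. mob_aux m' P x z)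
      = (\<Sum>z\<in>{z\<in>P. x \<le> z \<and> z < y}. mob_aux n' P x z)"
    by (intro sum.cong) auto
  then show ?case by (simp add: m n)
qed

lemma moebius_refl [simp]: "moebius P x x = 1"
  by (simp add: moebius_def)

lemma moebius_less:
  fixes P :: "'a::order set"
  assumes "finite P" "y \<in> P" "x < y"
  shows "moebius P x y = - (\<Sum>z\<in>{z\<in>P. x \<le> z \<and> z < y}. moebius P x z)"
proof -
  have lower: "card {z\<in>P. z < y} < card P"
    using assms by (intro psubset_card_mono) auto
  then obtain n where n: "card P = Suc n" by (cases "card P") auto
  have fuel: "mob_aux n P x z = moebius P x z" if "z \<in> P" "z < y" for z
    unfolding moebius_def
    using card_strict_lower_set_less[OF assms(1) that] lower n
    by (intro mob_aux_fuel_independent[OF assms(1) that(1)]) simp_all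
  have "moebius P x y = - (\<Sum>z\<in>{z\<in>P. x \<le> z \<and> z < y}. mob_aux n P x z)"
    using assms(3) by (simp add: moebius_def n)
  also have "\<dots> = - (\<Sum>z\<in>{z\<in>P. x \<le> z \<and> z < y}. moebius P x z)"
    using fuel by (intro arg_cong[where f = uminus] sum.cong) auto
  finally show ?thesis .
qed

lemma signed_chain_sum_1:
  fixes P :: "'a::order set" and bot :: 'a
  assumes "finite P" "bot \<in> P" "\<forall>x\<in>P. bot \<le> x" "y \<in> P"
  shows "signed_chain_sum P w 1 y = w bot * of_int (moebius P bot y)"
  using assms(1,4)
proof (induction y rule: finite_less_induct)
  case (less y)
  have "signed_chain_sum P w 1 y
      = w y * (if y = bot then 1 else 0) - (\<Sum>z\<in>{z\<in>P. z < y}. w bot * of_int (moebius P bot z))"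
    using signed_chain_sum_Suc_rec[OF assms(1) less.hyps, of w 0] less.IH
    by (simp add: signed_chain_sum_0[OF assms(1-3) less.hyps])
  also have "\<dots> = w bot * of_int (moebius P bot y)"
  proof (cases "y = bot")
    case True
    have no_lower: "{z\<in>P. z < bot} = {}" using assms(3) by (auto simp: less_le_not_le)
    show ?thesis using True by (simp add: no_lower)
  next
    case False
    then have "bot < y" "{z\<in>P. bot \<le> z \<and> z < y} = {z\<in>P. z < y}"
      using assms(3) less.hyps by (auto simp: order.order_iff_strict)
    with False show ?thesis
      by (simp add: moebius_less[OF assms(1) less.hyps] sum_distrib_left)
  qed
  finally show ?case .
qed

lemma sum_chains_in_signed_complete_hom_2:
  fixes P :: "'a::order set" and bot top :: 'a and w :: "'a \<Rightarrow> 'b::comm_ring_1"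
  assumes "finite P" "bot \<in> P" "top \<in> P" "\<forall>x\<in>P. bot \<le> x \<and> x \<le> top"
  shows "(\<Sum>c\<in>chains_in P. (-1) ^ (length c - 1) * complete_hom 2 (map w c))
    = w bot * w top * of_int (moebius P bot top)"
proof -
  have "P - {top} = {z\<in>P. z < top}"
    using assms(4) by (auto simp: order.order_iff_strict)
  then have "(\<Sum>c\<in>chains_in P. (-1) ^ (length c - 1) * complete_hom 2 (map w c))
      = signed_chain_sum P w 2 top + (\<Sum>z\<in>{z\<in>P. z < top}. signed_chain_sum P w 2 z)"
    unfolding sum_chains_in_by_last[OF assms(1)] signed_chain_sum_def[symmetric]
    using sum.remove[OF assms(1,3)] by simp
  also have "\<dots> = w top * signed_chain_sum P w 1 top"
    using signed_chain_sum_Suc_rec[OF assms(1,3), of w 1] by (simp add: numeral_2_eq_2)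
  also have "\<dots> = w bot * w top * of_int (moebius P bot top)"
    using signed_chain_sum_1[of P bot top w] assms by (simp add: ac_simps)
  finally show ?thesis .
qed

theorem mainTheorem14:
  fixes P :: "'a::order set" and h :: "'a \<Rightarrow> nat" and bot top :: 'a
  assumes "finite P"
    and "bot \<in> P" and "top \<in> P"
    and "\<forall>x\<in>P. bot \<le> x \<and> x \<le> top"
    and "height_function P h"
  shows "poly (qZeta P h) (qint (-1)) =
           qvar powi (- (int (h bot) + int (h top))) * of_int (moebius P bot top)"
proof -
  have "poly (qZeta P h) (qint (-1)) = 1 / q ^ h bot * (1 / q ^ h top) * of_int (moebius P bot top)"
    unfolding poly_qZeta_qint_minus_one[OF assms(1,5)]
    by (rule sum_chains_in_signed_complete_hom_2[OF assms(1-4)])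
  also have "1 / q ^ h bot * (1 / q ^ h top) = q powi (- (int (h bot) + int (h top)))"
    by (simp add: power_int_diff power_int_minus divide_inverse power_int_of_nat
        flip: of_nat_add power_add inverse_mult_distrib)
  finally show ?thesis .
qed

end
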